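(* There is exactly one subset $\mathcal{U}\subseteq\mathbb{P}_2(3)$ with $|\mathcal{U}|=2^3$ that is an equidistant linear code (for some choice of the addition $\boxplus$).
   Context: $\mathbb{P}_2(3)$ denotes the set of all subspaces of $\mathbb{F}_2^3$. For subspaces $X,Y$ the subspace distance is $d_S(X,Y)=\dim X+\dim Y-2\dim(X\cap Y)$. A linear code in $\mathbb{P}_q(n)$ is a subset $\mathcal{U}\subseteq\mathbb{P}_q(n)$ with $\{0\}\in\mathcal{U}$ for which there exists a map $\boxplus:\mathcal{U}\times\mathcal{U}\to\mathcal{U}$ such that (i) $(\mathcal{U},\boxplus)$ is an abelian group; (ii) its identity element is $\{0\}$; (iii) $X\boxplus X=\{0\}$ for all $X\in\mathcal{U}$; (iv) $d_S(Y_1\boxplus X,Y_2\boxplus X)=d_S(Y_1,Y_2)$ for all $Y_1,Y_2,X\in\mathcal{U}$. It is equidistant if there is $r$ with $d_S(X,Y)=r$ for all distinct $X,Y\in\mathcal{U}$. *)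

theory Defs
  imports "HOL-Analysis.Analysis" "HOL-Library.Z2" "HOL-Algebra.Group"
begin

type_synonym vec3 = "bit ^ 3"

definition P23 :: "vec3 set set" where
  "P23 = {X. vec.subspace X}"

text \<open>Subspace distance d_S(X,Y) = dim X + dim Y - 2 dim (X \<inter> Y) (always nonnegative).\<close>
definition dS :: "vec3 set \<Rightarrow> vec3 set \<Rightarrow> nat" where
  "dS X Y = vec.dim X + vec.dim Y - 2 * vec.dim (X \<inter> Y)"

definition linear_code_with :: "vec3 set set \<Rightarrow> (vec3 set \<Rightarrow> vec3 set \<Rightarrow> vec3 set) \<Rightarrow> bool" where
  "linear_code_with U bplus \<longleftrightarrow>
     U \<subseteq> P23 \<and> {0} \<in> U \<and>
     comm_group \<lparr>carrier = U, monoid.mult = bplus, one = {0}\<rparr> \<and>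
     (\<forall>X\<in>U. bplus X X = {0}) \<and>
     (\<forall>Y1\<in>U. \<forall>Y2\<in>U. \<forall>X\<in>U. dS (bplus Y1 X) (bplus Y2 X) = dS Y1 Y2)"

definition linear_code :: "vec3 set set \<Rightarrow> bool" where
  "linear_code U \<longleftrightarrow> (\<exists>bplus. linear_code_with U bplus)"

definition equidistant :: "vec3 set set \<Rightarrow> bool" where
  "equidistant U \<longleftrightarrow> (\<exists>r. \<forall>X\<in>U. \<forall>Y\<in>U. X \<noteq> Y \<longrightarrow> dS X Y = r)"

end

theory Submission
  imports Defs
begin

(* In an equidistant family U containing {0}, every X <> {0} has dimension r = d_S({0}, X), and
   for distinct nonzero X, Y the equation d_S(X, Y) = r says 2 dim (X \<inter> Y) = r with
   dim (X \<inter> Y) < r; inside F_2^3 this forces r = 2.  Hence U lies in {0} together with the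
   planes, and there are exactly 7 planes, since the hyperplanes of F_2^n are the kernels of the
   2^n - 1 nonzero functionals x |-> a . x.  Conversely, {0} with the planes is equidistant (two
   planes of F_2^3 meet in a line), and any equidistant family of size 2^k is linear: transport
   the addition of F_2^k along a bijection; translations are injective, so they preserve a
   distance that only distinguishes equal from distinct members. *)

lemma UNIV_bit: "(UNIV :: bit set) = {0, 1}"
  by (auto intro: bit.exhaust)

instance bit :: finite
  by standard (simp add: UNIV_bit)

lemma CARD_bit [simp]: "CARD(bit) = 2"
  by (simp add: UNIV_bit)

lemma bit_vec_add_self [simp]:
  fixes x :: "bit ^ 'n"
  shows "x + x = 0" and "2 * x = 0" \<comment> \<open>simp normalises \<open>x + x\<close> to \<open>2 * x\<close>\<close>
  by (simp_all add: vec_eq_iff)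

lemma bit_vec_diff_eq_add [simp]: "x - y = (x + y :: bit ^ 'n)"
  by (simp add: vec_eq_iff)

\<comment> \<open>Keep \<open>+\<close> and \<open>*\<close> on bit as field operations instead of xor/and.\<close>
declare add_bit_eq_xor [simp del] mult_bit_eq_and [simp del]

lemma subspace_disjoint_translate:
  fixes S :: "('a::field ^ 'n) set"
  assumes "vec.subspace S" "x \<notin> S"
  shows "S \<inter> (+) x ` S = {}"
proof -
  have "x + s \<notin> S" if "s \<in> S" for s
    using vec.subspace_diff[OF assms(1), of "x + s" s] that assms(2) by auto
  then show ?thesis
    by blast
qed

lemma span_insert_bit:
  fixes b :: "bit ^ 'n"
  shows "vec.span (insert b B) = vec.span B \<union> (+) b ` vec.span B"
proof -
  have "x \<in> vec.span B \<union> (+) b ` vec.span B" if "x - k *s b \<in> vec.span B" for x k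
  proof (cases "k = 0")
    case False
    then have "x + b \<in> vec.span B"
      using that by simp
    moreover have "x = b + (x + b)"
      by (simp add: add.left_commute)
    ultimately show ?thesis
      by blast
  qed (use that in simp)
  moreover have "y \<in> vec.span B \<Longrightarrow> \<exists>k. b + y - k *s b \<in> vec.span B" for y
    by (rule exI[of _ 1]) (simp del: bit_vec_diff_eq_add)
  ultimately show ?thesis
    by (auto simp: vec.span_insert intro: exI[of _ 0])
qed

lemma card_span_independent_bit:
  fixes B :: "(bit ^ 'n) set"
  assumes "vec.independent B"
  shows "card (vec.span B) = 2 ^ card B"
proof -
  have "finite B"
    using assms by (rule vec.finiteI_independent)
  then show ?thesis
    using assms
  proof (induction B rule: finite_induct)
    case (insert b B)
    then have "vec.independent B" "b \<notin> vec.span B"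
      by (auto simp: vec.independent_insert)
    then have "card (vec.span B \<union> (+) b ` vec.span B) = 2 * card (vec.span B)"
      by (subst card_Un_disjoint)
        (auto simp: card_image subspace_disjoint_translate[OF vec.subspace_span])
    then show ?case
      using insert by (simp add: span_insert_bit \<open>vec.independent B\<close>)
  qed simp
qed

lemma card_subspace_bit:
  fixes S :: "(bit ^ 'n) set"
  assumes "vec.subspace S"
  shows "card S = 2 ^ vec.dim S"
proof -
  obtain B where "vec.independent B" "vec.span B = S" "card B = vec.dim S"
    using vec.basis_subspace_exists[OF assms] by metis
  then show ?thesis
    using card_span_independent_bit by metis
qed

lemma half_subspace_add_outside:
  fixes H :: "(bit ^ 'n) set"
  assumes "vec.subspace H" "2 * card H = CARD(bit ^ 'n)" "x \<notin> H" "y \<notin> H"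
  shows "x + y \<in> H"
proof -
  have "card (H \<union> (+) x ` H) = CARD(bit ^ 'n)"
    using assms by (subst card_Un_disjoint) (auto simp: card_image subspace_disjoint_translate)
  then have "H \<union> (+) x ` H = UNIV"
    by (simp add: card_eq_UNIV_imp_eq_UNIV)
  then obtain h where "h \<in> H" "y = x + h"
    using assms(4) by blast
  then show ?thesis
    by (simp flip: add.assoc)
qed

definition bit_dot :: "bit ^ 'n \<Rightarrow> bit ^ 'n \<Rightarrow> bit" where
  "bit_dot a x = (\<Sum>i\<in>UNIV. a $ i * x $ i)"

definition dot_kernel :: "bit ^ 'n \<Rightarrow> (bit ^ 'n) set" where
  "dot_kernel a = {x. bit_dot a x = 0}"

lemma bit_dot_add: "bit_dot a (x + y) = bit_dot a x + bit_dot a y"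
  by (simp add: bit_dot_def distrib_left sum.distrib)

lemma bit_dot_scale: "bit_dot a (c *s x) = c * bit_dot a x"
  by (simp add: bit_dot_def sum_distrib_left algebra_simps)

lemma bit_dot_axis: "bit_dot a (axis i 1) = a $ i"
proof -
  have "bit_dot a (axis i 1) = (\<Sum>j\<in>UNIV. if j = i then a $ j else 0)"
    unfolding bit_dot_def by (rule sum.cong) (auto simp: axis_def)
  then show ?thesis
    by simp
qed

lemma subspace_dot_kernel: "vec.subspace (dot_kernel a)"
proof -
  have "bit_dot a 0 = 0"
    by (simp add: bit_dot_def)
  then show ?thesis
    by (auto simp: vec.subspace_def dot_kernel_def bit_dot_add bit_dot_scale)
qed

lemma inj_dot_kernel: "inj dot_kernel"
proof (rule injI)
  fix a b :: "bit ^ 'n"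
  assume "dot_kernel a = dot_kernel b"
  then have "bit_dot a x = 0 \<longleftrightarrow> bit_dot b x = 0" for x
    by (auto simp: dot_kernel_def set_eq_iff)
  then have "bit_dot a x = bit_dot b x" for x
    by (metis bit_not_zero_iff)
  then show "a = b"
    by (simp add: vec_eq_iff flip: bit_dot_axis)
qed

lemma card_dot_kernel:
  fixes a :: "bit ^ 'n"
  assumes "a \<noteq> 0"
  shows "2 * card (dot_kernel a) = CARD(bit ^ 'n)"
proof -
  obtain i :: 'n where "a $ i = 1"
    using assms by (auto simp: vec_eq_iff)
  define e :: "bit ^ 'n" where "e = axis i 1"
  have e: "bit_dot a e = 1"
    using \<open>a $ i = 1\<close> by (simp add: e_def bit_dot_axis)
  have "(+) e ` dot_kernel a = - dot_kernel a"
  proof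
    show "(+) e ` dot_kernel a \<subseteq> - dot_kernel a"
      using e by (auto simp: dot_kernel_def bit_dot_add)
    show "- dot_kernel a \<subseteq> (+) e ` dot_kernel a"
    proof
      fix y
      assume "y \<in> - dot_kernel a"
      then have "e + y \<in> dot_kernel a"
        using e by (simp add: dot_kernel_def bit_dot_add)
      moreover have "y = e + (e + y)"
        by (simp flip: add.assoc)
      ultimately show "y \<in> (+) e ` dot_kernel a"
        by blast
    qed
  qed
  then have "card (- dot_kernel a) = card (dot_kernel a)"
    by (metis card_image inj_on_add)
  moreover have "card (dot_kernel a) + card (- dot_kernel a) = CARD(bit ^ 'n)"
    using card_Un_disjoint[of "dot_kernel a" "- dot_kernel a"] by (simp add: Compl_partition)
  ultimately show ?thesis
    by simp
qed

lemma half_subspace_eq_dot_kernel: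
  fixes H :: "(bit ^ 'n) set"
  assumes H: "vec.subspace H" "2 * card H = CARD(bit ^ 'n)"
  obtains a where "H = dot_kernel a"
proof -
  have add_mem_iff: "x + y \<in> H \<longleftrightarrow> (x \<in> H \<longleftrightarrow> y \<in> H)" for x y
  proof (cases "x \<in> H")
    case True
    then show ?thesis
      using vec.subspace_add[OF H(1), of x y] vec.subspace_add[OF H(1), of x "x + y"]
      by (auto simp flip: add.assoc)
  next
    case False
    then show ?thesis
      using half_subspace_add_outside[OF H False, of y] vec.subspace_add[OF H(1), of "x + y" y]
      by (auto simp: add.assoc)
  qed
  \<comment> \<open>The indicator of the complement of \<open>H\<close> is additive, hence a linear functional.\<close>
  define f :: "bit ^ 'n \<Rightarrow> bit" where "f x = (if x \<in> H then 0 else 1)" for x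
  have f0: "f 0 = 0"
    using vec.subspace_0[OF H(1)] by (simp add: f_def)
  have f_add: "f (x + y) = f x + f y" for x y
    using add_mem_iff[of x y] by (auto simp: f_def)
  have f_scale: "f (c *s x) = c * f x" for c x
    using f0 by (cases c) auto
  define a where "a = (\<chi> i. f (axis i 1))"
  have "f x = bit_dot a x" for x
  proof -
    have "f x = f (\<Sum>i\<in>UNIV. x $ i *s axis i 1)"
      by (simp add: basis_expansion)
    also have "\<dots> = (\<Sum>i\<in>UNIV. f (x $ i *s axis i 1))"
      by (simp only: sum_comp_morphism[of f, OF f0 f_add, symmetric] o_def)
    also have "\<dots> = bit_dot a x"
      by (simp add: f_scale a_def bit_dot_def mult.commute)
    finally show ?thesis .
  qed
  then have "x \<in> H \<longleftrightarrow> bit_dot a x = 0" for x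
    using f_def by (metis zero_neq_one)
  then have "H = dot_kernel a"
    by (auto simp: dot_kernel_def)
  then show thesis
    by (rule that)
qed

lemma hyperplanes_bit_eq_dot_kernels:
  "{H :: (bit ^ 'n) set. vec.subspace H \<and> vec.dim H + 1 = CARD('n)} = dot_kernel ` (- {0})"
proof -
  have half_iff: "2 * card H = CARD(bit ^ 'n) \<longleftrightarrow> vec.dim H + 1 = CARD('n)"
    if "vec.subspace H" for H :: "(bit ^ 'n) set"
    using card_subspace_bit[OF that] by (simp flip: power_Suc)
  have nonzero: "a \<noteq> 0" if "2 * card (dot_kernel a) = CARD(bit ^ 'n)" for a :: "bit ^ 'n"
  proof
    assume "a = 0"
    then have "dot_kernel a = UNIV"
      by (simp add: dot_kernel_def bit_dot_def)
    then show False
      using that by simp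
  qed
  show ?thesis
  proof (intro subset_antisym subsetI)
    fix H :: "(bit ^ 'n) set"
    assume "H \<in> {H. vec.subspace H \<and> vec.dim H + 1 = CARD('n)}"
    then have H: "vec.subspace H" "2 * card H = CARD(bit ^ 'n)"
      using half_iff by auto
    then obtain a where "H = dot_kernel a"
      by (rule half_subspace_eq_dot_kernel)
    then show "H \<in> dot_kernel ` (- {0})"
      using nonzero H(2) by auto
  next
    fix H :: "(bit ^ 'n) set"
    assume "H \<in> dot_kernel ` (- {0})"
    then obtain a where "a \<noteq> 0" "H = dot_kernel a"
      by auto
    then show "H \<in> {H. vec.subspace H \<and> vec.dim H + 1 = CARD('n)}"
      using half_iff subspace_dot_kernel card_dot_kernel by auto
  qed
qed

lemma card_hyperplanes_bit:
  "card {H :: (bit ^ 'n) set. vec.subspace H \<and> vec.dim H + 1 = CARD('n)} = 2 ^ CARD('n) - 1"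
proof -
  have "card (- {0 :: bit ^ 'n}) = 2 ^ CARD('n) - 1"
    by (simp add: Compl_eq_Diff_UNIV card_Diff_singleton)
  then show ?thesis
    unfolding hyperplanes_bit_eq_dot_kernels
    by (simp add: card_image[OF inj_on_subset[OF inj_dot_kernel subset_UNIV]])
qed

lemma dim_inter_less:
  fixes X Y :: "('a::field ^ 'n) set"
  assumes "vec.subspace X" "vec.subspace Y" "vec.dim X = vec.dim Y" "X \<noteq> Y"
  shows "vec.dim (X \<inter> Y) < vec.dim X"
proof (rule ccontr)
  assume not_less: "\<not> ?thesis"
  have "X \<inter> Y = X"
    by (rule vec.subspace_dim_equal)
      (use assms not_less in \<open>auto intro: vec.subspace_inter\<close>)
  moreover have "X \<inter> Y = Y"
    by (rule vec.subspace_dim_equal)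
      (use assms not_less in \<open>auto intro: vec.subspace_inter\<close>)
  ultimately show False
    using assms(4) by simp
qed

lemma dim_inter_hyperplanes:
  fixes X Y :: "('a::field ^ 'n) set"
  assumes "vec.subspace X" "vec.subspace Y" "X \<noteq> Y"
    and "vec.dim X + 1 = CARD('n)" "vec.dim Y + 1 = CARD('n)"
  shows "vec.dim (X \<inter> Y) + 2 = CARD('n)"
  using vec.dim_sums_Int[OF assms(1,2)] dim_subset_UNIV_cart_gen[of "{x + y |x y. x \<in> X \<and> y \<in> Y}"]
    dim_inter_less[OF assms(1,2) _ assms(3)] assms(4,5)
  by linarith

lemma dS_commute: "dS X Y = dS Y X"
  by (simp add: dS_def Int_commute)

lemma dS_zero_left:
  assumes "vec.subspace X"
  shows "dS {0} X = vec.dim X"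
proof -
  have "{0} \<inter> X = {0}"
    using vec.subspace_0[OF assms] by blast
  then show ?thesis
    by (simp add: dS_def)
qed

definition planes :: "vec3 set set" where
  "planes = {P. vec.subspace P \<and> vec.dim P = 2}"

lemma card_planes: "card planes = 7"
proof -
  have "planes = {H. vec.subspace H \<and> vec.dim H + 1 = CARD(3)}"
    by (auto simp: planes_def)
  then show ?thesis
    using card_hyperplanes_bit[where 'n = 3] by simp
qed

lemma dS_distinct_planes:
  assumes "P \<in> planes" "Q \<in> planes" "P \<noteq> Q"
  shows "dS P Q = 2"
proof -
  have "vec.dim (P \<inter> Q) + 2 = CARD(3)"
    using assms by (intro dim_inter_hyperplanes) (auto simp: planes_def)
  then show ?thesis
    using assms by (simp add: dS_def planes_def)
qed

definition plane_code :: "vec3 set set" where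
  "plane_code = insert {0} planes"

lemma plane_code_subset_P23: "plane_code \<subseteq> P23"
  by (auto simp: plane_code_def planes_def P23_def)

lemma card_plane_code: "card plane_code = 8"
proof -
  have "{0} \<notin> planes"
    by (simp add: planes_def)
  then show ?thesis
    by (simp add: plane_code_def card_planes card_insert_if)
qed

lemma dS_plane_code:
  assumes "X \<in> plane_code" "Y \<in> plane_code" "X \<noteq> Y"
  shows "dS X Y = 2"
  using assms dS_distinct_planes dS_zero_left dS_commute
  by (auto simp: plane_code_def planes_def)

lemma equidistant_subset_plane_code:
  assumes U: "U \<subseteq> P23" "{0} \<in> U" "equidistant U" "3 \<le> card U"
  shows "U \<subseteq> plane_code"
proof
  fix X
  assume "X \<in> U"
  show "X \<in> plane_code"
  proof (cases "X = {0}")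
    case False
    have "\<not> U \<subseteq> {{0}, X}"
      using card_mono[of "{{0}, X}" U] U(4) False by (auto simp: card_insert_if)
    then obtain Y where Y: "Y \<in> U" "Y \<noteq> {0}" "Y \<noteq> X"
      by blast
    obtain r where r: "\<And>X Y. X \<in> U \<Longrightarrow> Y \<in> U \<Longrightarrow> X \<noteq> Y \<Longrightarrow> dS X Y = r"
      using U(3) by (auto simp: equidistant_def)
    have sub: "vec.subspace Z" if "Z \<in> U" for Z
      using that U(1) by (auto simp: P23_def)
    have dims: "vec.dim X = r" "vec.dim Y = r"
      using r[OF U(2)] dS_zero_left sub \<open>X \<in> U\<close> False Y by metis+
    have "vec.dim (X \<inter> Y) < r"
      using dim_inter_less[OF sub sub] \<open>X \<in> U\<close> Y dims by metis
    moreover have "vec.dim X + vec.dim Y - 2 * vec.dim (X \<inter> Y) = r"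
      using r \<open>X \<in> U\<close> Y by (metis dS_def)
    moreover have "r \<le> 3"
      using dim_subset_UNIV_cart_gen[of X] dims by simp
    ultimately have "r = 2"
      using dims by presburger
    then show ?thesis
      using dims sub[OF \<open>X \<in> U\<close>] by (simp add: plane_code_def planes_def)
  qed (simp add: plane_code_def)
qed

lemma equidistant_imp_linear_code:
  fixes U :: "vec3 set set"
  assumes U: "U \<subseteq> P23" "{0} \<in> U" "equidistant U" "card U = CARD(bit ^ 'k)"
  shows "linear_code U"
proof -
  have "finite U"
    using U(4) card_ge_0_finite by fastforce
  then obtain \<phi> :: "bit ^ 'k \<Rightarrow> vec3 set" where \<phi>: "bij_betw \<phi> UNIV U"
    using finite_same_card_bij[of "UNIV :: (bit ^ 'k) set" U] U(4) by auto
  define \<psi> where "\<psi> = inv_into UNIV \<phi>"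
  have \<psi>_\<phi> [simp]: "\<psi> (\<phi> a) = a" for a
    using \<phi> by (simp add: \<psi>_def bij_betw_def)
  have \<phi>_\<psi> [simp]: "X \<in> U \<Longrightarrow> \<phi> (\<psi> X) = X" for X
    using \<phi> by (auto simp: \<psi>_def bij_betw_def f_inv_into_f)
  have \<phi>_in [simp]: "\<phi> a \<in> U" for a
    using \<phi> by (auto simp: bij_betw_def)
  obtain r where r: "\<And>X Y. X \<in> U \<Longrightarrow> Y \<in> U \<Longrightarrow> X \<noteq> Y \<Longrightarrow> dS X Y = r"
    using U(3) by (auto simp: equidistant_def)
  \<comment> \<open>Shifting by \<open>\<psi> {0}\<close> makes \<open>{0}\<close> the neutral element.\<close>
  define bplus where "bplus X Y = \<phi> (\<psi> X + \<psi> Y + \<psi> {0})" for X Y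
  have "comm_group \<lparr>carrier = U, monoid.mult = bplus, one = {0}\<rparr>"
  proof (rule comm_groupI, goal_cases)
    case (6 X)
    then show ?case
      by (intro bexI[of _ X]) (simp_all add: bplus_def U(2))
  qed (auto simp: bplus_def U(2) add_ac)
  moreover have "bplus X X = {0}" for X
    using U(2) by (simp add: bplus_def)
  moreover have "dS (bplus Y1 X) (bplus Y2 X) = dS Y1 Y2"
    if "Y1 \<in> U" "Y2 \<in> U" for X Y1 Y2
  proof (cases "Y1 = Y2")
    case False
    have "bplus Y1 X \<in> U" "bplus Y2 X \<in> U"
      by (simp_all add: bplus_def)
    moreover have "bplus Y1 X \<noteq> bplus Y2 X"
    proof
      assume "bplus Y1 X = bplus Y2 X"
      then have "\<psi> Y1 + \<psi> X + \<psi> {0} = \<psi> Y2 + \<psi> X + \<psi> {0}"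
        by (metis bplus_def \<psi>_\<phi>)
      then have "\<psi> Y1 = \<psi> Y2"
        by simp
      then show False
        using False that by (metis \<phi>_\<psi>)
    qed
    ultimately show ?thesis
      using r that False by metis
  qed (simp add: dS_def)
  ultimately show ?thesis
    unfolding linear_code_def linear_code_with_def using U(1,2) by (intro exI[of _ bplus]) auto
qed

theorem proposition1:
  shows "\<exists>!U. U \<subseteq> P23 \<and> card U = 2 ^ 3 \<and> linear_code U \<and> equidistant U"
proof (rule ex1I[of _ plane_code])
  have "equidistant plane_code"
    using dS_plane_code by (auto simp: equidistant_def)
  moreover have "card plane_code = CARD(bit ^ 3)"
    by (simp add: card_plane_code)
  moreover have "{0} \<in> plane_code"
    by (simp add: plane_code_def)
  ultimately have "linear_code plane_code"
    using equidistant_imp_linear_code plane_code_subset_P23 by blast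
  then show "plane_code \<subseteq> P23 \<and> card plane_code = 2 ^ 3 \<and> linear_code plane_code
      \<and> equidistant plane_code"
    using plane_code_subset_P23 card_plane_code \<open>equidistant plane_code\<close> by simp
next
  fix U
  assume U: "U \<subseteq> P23 \<and> card U = 2 ^ 3 \<and> linear_code U \<and> equidistant U"
  then have "{0} \<in> U"
    by (auto simp: linear_code_def linear_code_with_def)
  then have "U \<subseteq> plane_code"
    using U by (intro equidistant_subset_plane_code) auto
  moreover have "card U = card plane_code"
    using U card_plane_code by simp
  ultimately show "U = plane_code"
    using card_subset_eq[OF finite] by blast
qed

end
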